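(* If $G$ is a $k$-gate, then $G\in$ Helly $[k,2,2]$. Furthermore, $G$ admits a Helly $(k,2,2)$-representation on a host tree that is a star.
   Context: All graphs are finite and simple. An $EPT$ representation of a graph $G$ is a pair $\langle \mathcal{P},T\rangle$ where $T$ is a tree and $\mathcal{P}=(P_v)_{v\in V(G)}$ is a family of subpaths of $T$ such that two distinct vertices $v,w$ are adjacent if and only if $E(P_v)\cap E(P_w)\neq\emptyset$. If $T$ has maximum degree $h$ this is an $(h,2,2)$-representation. It is Helly if $(E(P))_{P\in\mathcal{P}}$ has the Helly property (every pairwise intersecting subfamily has nonempty total intersection); Helly $[h,2,2]$ is the class of graphs admitting a Helly $(h,2,2)$-representation. A clique is a maximal complete set. Gates are defined recursively: (i) every chordless cycle $C_n$ with $n\geq 4$ is a gate; (ii) if $H$ is a gate, $C$ and $C'$ are disjoint cliques of $H$, and $P=(v_1,\dots,v_l)$ with $l\geq 2$ is a chordless path vertex-disjoint from $H$, then the union of $H$ and $P$ together with all edges between $v_1$ and the vertices of $C$ and all edges between $v_l$ and the vertices of $C'$ is a gate; (iii) there are no other gates. A $k$-gate is a gate with exactly $k$ cliques. A star is a graph $K_{1,n}$. *)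

theory Defs
  imports Main
begin

type_synonym 'a graph = "'a set \<times> 'a set set"

definition verts :: "'a graph \<Rightarrow> 'a set" where "verts G = fst G"
definition edges :: "'a graph \<Rightarrow> 'a set set" where "edges G = snd G"

definition adj :: "'a graph \<Rightarrow> 'a \<Rightarrow> 'a \<Rightarrow> bool" where
  "adj G u v \<longleftrightarrow> {u, v} \<in> edges G"

definition wf_graph :: "'a graph \<Rightarrow> bool" where
  "wf_graph G \<longleftrightarrow> finite (verts G) \<and>
     edges G \<subseteq> {{u, v} | u v. u \<in> verts G \<and> v \<in> verts G \<and> u \<noteq> v}"

definition complete_set :: "'a graph \<Rightarrow> 'a set \<Rightarrow> bool" where
  "complete_set G C \<longleftrightarrow> C \<subseteq> verts G \<and> (\<forall>u\<in>C. \<forall>v\<in>C. u \<noteq> v \<longrightarrow> adj G u v)"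

definition clique :: "'a graph \<Rightarrow> 'a set \<Rightarrow> bool" where
  "clique G C \<longleftrightarrow> complete_set G C \<and> (\<forall>D. complete_set G D \<and> C \<subseteq> D \<longrightarrow> D = C)"

definition path_edges :: "'a list \<Rightarrow> 'a set set" where
  "path_edges xs = {{xs ! i, xs ! Suc i} | i. Suc i < length xs}"

definition cycle_edges :: "'a list \<Rightarrow> 'a set set" where
  "cycle_edges xs = {{xs ! i, xs ! ((Suc i) mod length xs)} | i. i < length xs}"

inductive gate :: "'a graph \<Rightarrow> bool" where
  gate_cycle: "distinct vs \<Longrightarrow> length vs \<ge> 4 \<Longrightarrow> gate (set vs, cycle_edges vs)"
| gate_ext: "gate H \<Longrightarrow> clique H C \<Longrightarrow> clique H C' \<Longrightarrow> C \<inter> C' = {} \<Longrightarrow>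
     distinct ps \<Longrightarrow> length ps \<ge> 2 \<Longrightarrow> set ps \<inter> verts H = {} \<Longrightarrow>
     gate (verts H \<union> set ps,
           edges H \<union> path_edges ps \<union> {{hd ps, c} | c. c \<in> C} \<union> {{last ps, c} | c. c \<in> C'})"

definition connected_graph :: "'a graph \<Rightarrow> bool" where
  "connected_graph G \<longleftrightarrow> (\<forall>u\<in>verts G. \<forall>v\<in>verts G. (adj G)\<^sup>*\<^sup>* u v)"

definition has_cycle :: "'a graph \<Rightarrow> bool" where
  "has_cycle G \<longleftrightarrow> (\<exists>cs. distinct cs \<and> length cs \<ge> 3 \<and> set cs \<subseteq> verts G \<and>
      (\<forall>i. Suc i < length cs \<longrightarrow> adj G (cs ! i) (cs ! Suc i)) \<and> adj G (last cs) (hd cs))"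

definition is_tree :: "'a graph \<Rightarrow> bool" where
  "is_tree T \<longleftrightarrow> wf_graph T \<and> verts T \<noteq> {} \<and> connected_graph T \<and> \<not> has_cycle T"

definition degree :: "'a graph \<Rightarrow> 'a \<Rightarrow> nat" where
  "degree G v = card {u. adj G u v}"

definition max_degree :: "'a graph \<Rightarrow> nat" where
  "max_degree G = Max (degree G ` verts G)"

definition is_star :: "'a graph \<Rightarrow> bool" where
  "is_star T \<longleftrightarrow> wf_graph T \<and> card (verts T) \<ge> 2 \<and>
     (\<exists>c\<in>verts T. edges T = {{c, x} | x. x \<in> verts T \<and> x \<noteq> c})"

definition is_subpath :: "'b graph \<Rightarrow> 'b list \<Rightarrow> bool" where
  "is_subpath T xs \<longleftrightarrow> distinct xs \<and> length xs \<ge> 2 \<and> set xs \<subseteq> verts T \<and>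
     (\<forall>i. Suc i < length xs \<longrightarrow> adj T (xs ! i) (xs ! Suc i))"

definition ept_rep :: "'a graph \<Rightarrow> 'b graph \<Rightarrow> ('a \<Rightarrow> 'b list) \<Rightarrow> bool" where
  "ept_rep G T P \<longleftrightarrow> is_tree T \<and> (\<forall>v\<in>verts G. is_subpath T (P v)) \<and>
     (\<forall>v\<in>verts G. \<forall>w\<in>verts G. v \<noteq> w \<longrightarrow>
        (adj G v w \<longleftrightarrow> path_edges (P v) \<inter> path_edges (P w) \<noteq> {}))"

definition helly_ept_rep :: "'a graph \<Rightarrow> 'b graph \<Rightarrow> ('a \<Rightarrow> 'b list) \<Rightarrow> bool" where
  "helly_ept_rep G T P \<longleftrightarrow> ept_rep G T P \<and>
     (\<forall>S. S \<subseteq> verts G \<and> S \<noteq> {} \<and>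
          (\<forall>v\<in>S. \<forall>w\<in>S. path_edges (P v) \<inter> path_edges (P w) \<noteq> {})
          \<longrightarrow> (\<Inter>v\<in>S. path_edges (P v)) \<noteq> {})"

definition helly_h22_rep :: "nat \<Rightarrow> 'a graph \<Rightarrow> 'b graph \<Rightarrow> ('a \<Rightarrow> 'b list) \<Rightarrow> bool" where
  "helly_h22_rep h G T P \<longleftrightarrow> helly_ept_rep G T P \<and> max_degree T = h"

text \<open>Helly [h,2,2]; host trees are taken with vertices in nat (every finite tree is isomorphic to one).\<close>
definition helly_h22 :: "nat \<Rightarrow> 'a graph \<Rightarrow> bool" where
  "helly_h22 h G \<longleftrightarrow> (\<exists>(T::nat graph) P. helly_h22_rep h G T P)"

definition num_cliques :: "'a graph \<Rightarrow> nat" where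
  "num_cliques G = card {C. clique G C}"

end

theory Submission
  imports Defs
begin

text \<open>In a gate the neighbourhood of every vertex x splits: it is the disjoint union of two
  nonempty sets X1, X2 such that x together with either of them is complete and no edge joins X1
  to X2. Chordless cycles of length at least 4 have this property, and attaching a chordless path
  to two disjoint cliques preserves it (the ends of the path join the clique they are attached
  to). Hence the cliques through x are exactly x + X1 and x + X2, two vertices are adjacent iff
  they share a clique, and vertices that pairwise share cliques all lie in one clique. Numbering
  the k cliques, represent x by the path of length two through the centre of the star K_{1,k}
  joining the leaves of its two cliques: its edges correspond to the cliques through x, so edge
  intersection is clique sharing and the Helly property is inherited from the cliques.\<close>

lemma adj_sym: "adj G u v \<longleftrightarrow> adj G v u"
  by (simp add: adj_def insert_commute)

lemma wf_graph_adjD: "wf_graph G \<Longrightarrow> adj G u v \<Longrightarrow> u \<in> verts G \<and> v \<in> verts G \<and> u \<noteq> v"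
  unfolding wf_graph_def adj_def by (auto simp: doubleton_eq_iff)

lemma complete_setD:
  assumes "complete_set G S"
  shows "S \<subseteq> verts G" "\<And>u v. u \<in> S \<Longrightarrow> v \<in> S \<Longrightarrow> u \<noteq> v \<Longrightarrow> adj G u v"
  using assms unfolding complete_set_def by simp_all

lemma complete_setI:
  assumes "S \<subseteq> verts G" "\<And>u v. u \<in> S \<Longrightarrow> v \<in> S \<Longrightarrow> u \<noteq> v \<Longrightarrow> adj G u v"
  shows "complete_set G S"
  using assms unfolding complete_set_def by simp

lemma complete_set_pair:
  "u \<in> verts G \<Longrightarrow> v \<in> verts G \<Longrightarrow> adj G u v \<Longrightarrow> complete_set G {u, v}"
  by (rule complete_setI) (use adj_sym[of G u v] in auto)

lemma complete_set_insert:
  assumes "complete_set G S" "a \<in> verts G" "\<And>c. c \<in> S \<Longrightarrow> adj G a c"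
  shows "complete_set G (insert a S)"
proof (rule complete_setI)
  show "insert a S \<subseteq> verts G" using assms(1,2) complete_setD(1) by blast
  show "adj G u v" if "u \<in> insert a S" "v \<in> insert a S" "u \<noteq> v" for u v
    using that assms(3) complete_setD(2)[OF assms(1)] adj_sym[of G a] by blast
qed

lemma complete_set_mono_graph:
  "complete_set H S \<Longrightarrow> verts H \<subseteq> verts G \<Longrightarrow> edges H \<subseteq> edges G \<Longrightarrow> complete_set G S"
  unfolding complete_set_def adj_def by blast

lemma cliqueD:
  assumes "clique G C"
  shows "complete_set G C" "\<And>D. complete_set G D \<Longrightarrow> C \<subseteq> D \<Longrightarrow> D = C"
  using assms unfolding clique_def by simp_all

lemma clique_subset_verts: "clique G C \<Longrightarrow> C \<subseteq> verts G"
  using cliqueD(1) complete_setD(1) by blast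

lemma clique_adj: "clique G C \<Longrightarrow> u \<in> C \<Longrightarrow> v \<in> C \<Longrightarrow> u \<noteq> v \<Longrightarrow> adj G u v"
  using complete_setD(2)[OF cliqueD(1)] .

lemma clique_nonempty: "clique G C \<Longrightarrow> x \<in> verts G \<Longrightarrow> C \<noteq> {}"
  using cliqueD(2)[of G C "{x}"] by (auto intro: complete_setI)

section \<open>Split neighbourhoods\<close>

definition nbhd_split :: "'a graph \<Rightarrow> 'a \<Rightarrow> 'a set \<Rightarrow> 'a set \<Rightarrow> bool" where
  "nbhd_split G x X1 X2 \<longleftrightarrow> X1 \<noteq> {} \<and> X2 \<noteq> {} \<and> X1 \<inter> X2 = {} \<and>
     complete_set G (insert x X1) \<and> complete_set G (insert x X2) \<and>
     (\<forall>y\<in>X1. \<forall>z\<in>X2. \<not> adj G y z) \<and> (\<forall>y. adj G x y \<longleftrightarrow> y \<in> X1 \<union> X2)"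

definition nbhd_split_graph :: "'a graph \<Rightarrow> bool" where
  "nbhd_split_graph G \<longleftrightarrow> wf_graph G \<and> verts G \<noteq> {} \<and>
     (\<forall>x\<in>verts G. \<exists>X1 X2. nbhd_split G x X1 X2)"

lemma nbhd_splitD:
  assumes "nbhd_split G x X1 X2"
  shows "X1 \<noteq> {}" "X2 \<noteq> {}" "X1 \<inter> X2 = {}" "complete_set G (insert x X1)"
    "complete_set G (insert x X2)" "\<And>y z. y \<in> X1 \<Longrightarrow> z \<in> X2 \<Longrightarrow> \<not> adj G y z"
    "\<And>y. adj G x y \<longleftrightarrow> y \<in> X1 \<union> X2"
  using assms unfolding nbhd_split_def by simp_all

lemma nbhd_splitI:
  assumes "X1 \<noteq> {}" "X2 \<noteq> {}" "X1 \<inter> X2 = {}" "complete_set G (insert x X1)"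
    "complete_set G (insert x X2)" "\<And>y z. y \<in> X1 \<Longrightarrow> z \<in> X2 \<Longrightarrow> \<not> adj G y z"
    "\<And>y. adj G x y \<longleftrightarrow> y \<in> X1 \<union> X2"
  shows "nbhd_split G x X1 X2"
  using assms unfolding nbhd_split_def by simp

lemma nbhd_split_commute: "nbhd_split G x X1 X2 \<Longrightarrow> nbhd_split G x X2 X1"
  unfolding nbhd_split_def by (metis Int_commute Un_commute adj_sym)

lemma nbhd_split_not_mem: "wf_graph G \<Longrightarrow> nbhd_split G x X1 X2 \<Longrightarrow> x \<notin> X1 \<union> X2"
  using wf_graph_adjD[of G x x] nbhd_splitD(7)[of G x X1 X2 x] by blast

lemma clique_nbhd_split:
  assumes split: "nbhd_split G x X1 X2"
  shows "clique G (insert x X1)"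
  unfolding clique_def
proof (intro conjI allI impI)
  note d = nbhd_splitD[OF split]
  show "complete_set G (insert x X1)" using d(4) .
  fix D assume D: "complete_set G D \<and> insert x X1 \<subseteq> D"
  then have adj_D: "adj G u v" if "u \<in> D" "v \<in> D" "u \<noteq> v" for u v
    using that D unfolding complete_set_def by blast
  obtain w where w: "w \<in> X1" using d(1) by blast
  have "y \<in> insert x X1" if "y \<in> D" "y \<noteq> x" for y
  proof -
    have "y \<in> X1 \<union> X2" using d(7) adj_D D that by blast
    moreover have "y \<notin> X2" using d(3,6) adj_D D that(1) w by blast
    ultimately show ?thesis by blast
  qed
  then show "D = insert x X1" using D by blast
qed

lemma clique_through_nbhd_split:
  assumes split: "nbhd_split G x X1 X2" and D: "clique G D" "x \<in> D"
  shows "D = insert x X1 \<or> D = insert x X2"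
proof -
  note d = nbhd_splitD[OF split]
  have nbhd: "y \<in> X1 \<union> X2" if "y \<in> D" "y \<noteq> x" for y
    using clique_adj[OF D(1)] D(2) d(7) that by blast
  show ?thesis
  proof (cases "D \<subseteq> insert x X1")
    case True
    then show ?thesis using cliqueD(2)[OF D(1) d(4)] by blast
  next
    case False
    then obtain z where z: "z \<in> D" "z \<in> X2" using nbhd by blast
    have "y \<in> insert x X2" if "y \<in> D" for y
      using nbhd[OF that] clique_adj[OF D(1) that z(1)] d(6) z by blast
    then show ?thesis using cliqueD(2)[OF D(1) d(5)] by blast
  qed
qed

lemma cliques_through_nbhd_split:
  assumes "wf_graph G" and split: "nbhd_split G x X1 X2"
  shows "{C. clique G C \<and> x \<in> C} = {insert x X1, insert x X2}"
    and "insert x X1 \<noteq> insert x X2"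
proof -
  have cliques: "clique G (insert x X1)" "clique G (insert x X2)"
    using clique_nbhd_split[OF split] clique_nbhd_split[OF nbhd_split_commute[OF split]] .
  show "{C. clique G C \<and> x \<in> C} = {insert x X1, insert x X2}"
  proof
    show "{C. clique G C \<and> x \<in> C} \<subseteq> {insert x X1, insert x X2}"
      using clique_through_nbhd_split[OF split] by blast
    show "{insert x X1, insert x X2} \<subseteq> {C. clique G C \<and> x \<in> C}"
      using cliques by blast
  qed
  obtain y where "y \<in> X1" using nbhd_splitD(1)[OF split] by blast
  moreover have "y \<notin> X2" "y \<noteq> x"
    using calculation nbhd_splitD(3)[OF split] nbhd_split_not_mem[OF assms] by blast+
  ultimately show "insert x X1 \<noteq> insert x X2" by blast
qed

lemma adj_iff_common_clique:
  assumes split: "nbhd_split G v X1 X2" and "v \<noteq> w"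
  shows "adj G v w \<longleftrightarrow> (\<exists>C. clique G C \<and> v \<in> C \<and> w \<in> C)"
proof
  assume "adj G v w"
  then consider "w \<in> insert v X1" | "w \<in> insert v X2" using nbhd_splitD(7)[OF split] by blast
  then show "\<exists>C. clique G C \<and> v \<in> C \<and> w \<in> C"
  proof cases
    case 1
    then show ?thesis using clique_nbhd_split[OF split] by blast
  next
    case 2
    then show ?thesis using clique_nbhd_split[OF nbhd_split_commute[OF split]] by blast
  qed
next
  assume "\<exists>C. clique G C \<and> v \<in> C \<and> w \<in> C"
  then obtain C where "clique G C" "v \<in> C" "w \<in> C" by blast
  then show "adj G v w" using clique_adj assms(2) by metis
qed

text \<open>The clique containing S can be taken to be one of the two cliques through v.\<close>
lemma pairwise_common_clique_imp_clique:
  assumes split: "nbhd_split G v X1 X2" and "v \<in> S"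
    and pairwise: "\<And>u w. u \<in> S \<Longrightarrow> w \<in> S \<Longrightarrow> \<exists>C. clique G C \<and> u \<in> C \<and> w \<in> C"
  shows "\<exists>C. clique G C \<and> S \<subseteq> C"
proof (rule ccontr)
  assume none: "\<nexists>C. clique G C \<and> S \<subseteq> C"
  have sides: "w \<in> insert v X1 \<or> w \<in> insert v X2" if "w \<in> S" for w
    using pairwise[OF \<open>v \<in> S\<close> that] clique_through_nbhd_split[OF split] by blast
  obtain u where u: "u \<in> S" "u \<notin> insert v X1"
    using none clique_nbhd_split[OF split] by blast
  obtain w where w: "w \<in> S" "w \<notin> insert v X2"
    using none clique_nbhd_split[OF nbhd_split_commute[OF split]] by blast
  have u_X2: "u \<in> X2" and w_X1: "w \<in> X1" using sides u w by blast+
  then have "w \<noteq> u" using nbhd_splitD(3)[OF split] by blast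
  obtain D where "clique G D" "w \<in> D" "u \<in> D" using pairwise[OF w(1) u(1)] by blast
  then have "adj G w u" using clique_adj \<open>w \<noteq> u\<close> by metis
  then show False using nbhd_splitD(6)[OF split w_X1 u_X2] by blast
qed

section \<open>Gates have split neighbourhoods\<close>

lemma adj_cycle_nth:
  assumes "distinct vs" "a < length vs" "b < length vs"
  shows "adj (set vs, cycle_edges vs) (vs ! a) (vs ! b) \<longleftrightarrow>
    b = Suc a mod length vs \<or> a = Suc b mod length vs"
proof -
  have inj: "vs ! i = vs ! j \<longleftrightarrow> i = j" if "i < length vs" "j < length vs" for i j
    using assms(1) that nth_eq_iff_index_eq by blast
  have mod_lt: "Suc i mod length vs < length vs" for i
    using assms(2) by (intro mod_less_divisor) auto
  have "adj (set vs, cycle_edges vs) (vs ! a) (vs ! b) \<longleftrightarrow>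
      (\<exists>i<length vs. {vs ! a, vs ! b} = {vs ! i, vs ! (Suc i mod length vs)})"
    unfolding adj_def edges_def cycle_edges_def by auto
  also have "\<dots> \<longleftrightarrow> (\<exists>i<length vs. (a = i \<and> b = Suc i mod length vs) \<or> (a = Suc i mod length vs \<and> b = i))"
    using assms(2,3) inj mod_lt by (auto simp: doubleton_eq_iff)
  finally show ?thesis using assms(2,3) by auto
qed

lemma wf_graph_cycle:
  assumes "distinct vs" "length vs \<ge> 2"
  shows "wf_graph (set vs, cycle_edges vs)"
  unfolding wf_graph_def verts_def edges_def fst_conv snd_conv
proof (intro conjI subsetI)
  fix e assume "e \<in> cycle_edges vs"
  then obtain i where i: "i < length vs" "e = {vs ! i, vs ! (Suc i mod length vs)}"
    unfolding cycle_edges_def by auto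
  have "Suc i mod length vs < length vs" "Suc i mod length vs \<noteq> i"
    using i(1) assms(2) by (auto simp: mod_Suc)
  then have "vs ! i \<in> set vs" "vs ! (Suc i mod length vs) \<in> set vs"
    "vs ! i \<noteq> vs ! (Suc i mod length vs)"
    using nth_eq_iff_index_eq[OF assms(1) i(1)] i(1) by auto
  then show "e \<in> {{u, v} |u v. u \<in> set vs \<and> v \<in> set vs \<and> u \<noteq> v}"
    using i(2) by blast
qed simp

lemma nbhd_split_graph_cycle:
  assumes dist: "distinct vs" and len: "length vs \<ge> 4"
  shows "nbhd_split_graph (set vs, cycle_edges vs)"
proof -
  define n where "n = length vs"
  define G where "G = (set vs, cycle_edges vs)"
  define sc where "sc i = (if Suc i = n then 0 else Suc i)" for i
  define pr where "pr i = (if i = 0 then n - 1 else i - 1)" for i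
  have n4: "n \<ge> 4" using len n_def by simp
  have sc_mod: "Suc i mod n = sc i" if "i < n" for i
    using that unfolding sc_def by (simp add: mod_Suc)
  have idx: "sc i < n" "pr i < n" if "i < n" for i using that n4 unfolding sc_def pr_def by auto
  have inj: "vs ! a = vs ! b \<longleftrightarrow> a = b" if "a < n" "b < n" for a b
    using dist that n_def nth_eq_iff_index_eq by blast
  have adj: "adj G (vs ! a) (vs ! b) \<longleftrightarrow> b = sc a \<or> a = sc b" if "a < n" "b < n" for a b
    using adj_cycle_nth[OF dist] that sc_mod unfolding G_def n_def by simp
  have vG: "verts G = set vs" by (simp add: G_def verts_def)
  have wf: "wf_graph G" using wf_graph_cycle[OF dist] len unfolding G_def by simp
  have "\<exists>X1 X2. nbhd_split G x X1 X2" if x: "x \<in> verts G" for x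
  proof -
    obtain j where j: "j < n" "x = vs ! j" using x vG n_def by (auto simp: in_set_conv_nth)
    have "nbhd_split G x {vs ! pr j} {vs ! sc j}"
    proof (rule nbhd_splitI)
      have adj_pr: "adj G x (vs ! pr j)" and adj_sc: "adj G x (vs ! sc j)"
        using adj j idx n4 unfolding pr_def sc_def by auto
      then show "complete_set G (insert x {vs ! pr j})" "complete_set G (insert x {vs ! sc j})"
        using complete_set_pair wf wf_graph_adjD by fastforce+
      show "{vs ! pr j} \<inter> {vs ! sc j} = {}"
        using inj[OF idx(2,1)[OF j(1)]] j(1) n4 unfolding pr_def sc_def by auto
      show "\<not> adj G y z" if "y \<in> {vs ! pr j}" "z \<in> {vs ! sc j}" for y z
        using that adj idx j n4 unfolding pr_def sc_def by auto
      show "adj G x y \<longleftrightarrow> y \<in> {vs ! pr j} \<union> {vs ! sc j}" for y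
      proof
        assume "adj G x y"
        then obtain b where b: "b < n" "y = vs ! b"
          using wf_graph_adjD[OF wf] vG n_def by (auto simp: in_set_conv_nth)
        then have "b = sc j \<or> b = pr j"
          using adj j \<open>adj G x y\<close> unfolding sc_def pr_def by (auto split: if_splits)
        then show "y \<in> {vs ! pr j} \<union> {vs ! sc j}" using b by auto
      qed (use adj_pr adj_sc in auto)
    qed auto
    then show ?thesis by blast
  qed
  then show ?thesis
    unfolding nbhd_split_graph_def G_def[symmetric] using wf vG n4 n_def by auto
qed

lemma path_edges_subset:
  "distinct ps \<Longrightarrow> path_edges ps \<subseteq> {{u, v} | u v. u \<in> set ps \<and> v \<in> set ps \<and> u \<noteq> v}"
  unfolding path_edges_def by (fastforce simp: nth_eq_iff_index_eq)

lemma doubleton_in_path_edges: "{u, v} \<in> path_edges ps \<Longrightarrow> u \<in> set ps \<and> v \<in> set ps"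
  unfolding path_edges_def by (auto simp: doubleton_eq_iff)

lemma path_edges_nth_iff:
  assumes "distinct ps" "i < length ps"
  shows "{ps ! i, y} \<in> path_edges ps \<longleftrightarrow>
    (0 < i \<and> y = ps ! (i - 1)) \<or> (Suc i < length ps \<and> y = ps ! Suc i)"
proof
  assume "{ps ! i, y} \<in> path_edges ps"
  then obtain m where m: "Suc m < length ps" "{ps ! i, y} = {ps ! m, ps ! Suc m}"
    unfolding path_edges_def by blast
  then have "(i = m \<and> y = ps ! Suc m) \<or> (i = Suc m \<and> y = ps ! m)"
    using assms nth_eq_iff_index_eq[OF assms(1)] by (auto simp: doubleton_eq_iff)
  then show "(0 < i \<and> y = ps ! (i - 1)) \<or> (Suc i < length ps \<and> y = ps ! Suc i)"
    using m(1) by auto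
next
  assume "(0 < i \<and> y = ps ! (i - 1)) \<or> (Suc i < length ps \<and> y = ps ! Suc i)"
  then show "{ps ! i, y} \<in> path_edges ps"
  proof
    assume "0 < i \<and> y = ps ! (i - 1)"
    then have "{ps ! i, y} = {ps ! (i - 1), ps ! Suc (i - 1)}" "Suc (i - 1) < length ps"
      using assms(2) by auto
    then show ?thesis unfolding path_edges_def by blast
  qed (auto simp: path_edges_def)
qed

lemma mem_star_edges: "{u, v} \<in> {{a, c} | c. c \<in> S} \<longleftrightarrow> (u = a \<and> v \<in> S) \<or> (v = a \<and> u \<in> S)"
  by (auto simp: doubleton_eq_iff)

locale gate_extension =
  fixes H :: "'a graph" and C C' :: "'a set" and ps :: "'a list"
  assumes split_H: "nbhd_split_graph H"
    and clique_C: "clique H C" and clique_C': "clique H C'" and disjoint: "C \<inter> C' = {}"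
    and distinct_ps: "distinct ps" and length_ps: "length ps \<ge> 2"
    and fresh_ps: "set ps \<inter> verts H = {}"
begin

definition extended :: "'a graph" where
  "extended = (verts H \<union> set ps,
     edges H \<union> path_edges ps \<union> {{hd ps, c} | c. c \<in> C} \<union> {{last ps, c} | c. c \<in> C'})"

definition pred_side :: "nat \<Rightarrow> 'a set" where
  "pred_side i = (if i = 0 then C else {ps ! (i - 1)})"

definition succ_side :: "nat \<Rightarrow> 'a set" where
  "succ_side i = (if Suc i = length ps then C' else {ps ! Suc i})"

lemma wf_H: "wf_graph H"
  using split_H unfolding nbhd_split_graph_def by simp

lemma C_verts: "C \<subseteq> verts H" and C'_verts: "C' \<subseteq> verts H"
  using clique_C clique_C' clique_subset_verts by blast+

lemma C_nonempty: "C \<noteq> {}" and C'_nonempty: "C' \<noteq> {}"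
proof -
  obtain x where x: "x \<in> verts H" using split_H unfolding nbhd_split_graph_def by blast
  show "C \<noteq> {}" "C' \<noteq> {}"
    using clique_nonempty[OF clique_C x] clique_nonempty[OF clique_C' x] .
qed

lemma verts_extended: "verts extended = verts H \<union> set ps"
  by (simp add: extended_def verts_def)

lemma edges_extended:
  "edges extended = edges H \<union> path_edges ps \<union> {{hd ps, c} | c. c \<in> C} \<union> {{last ps, c} | c. c \<in> C'}"
  by (simp add: extended_def edges_def)

lemma hd_nth: "hd ps = ps ! 0" and last_nth: "last ps = ps ! (length ps - 1)"
proof -
  have "ps \<noteq> []" using length_ps by auto
  then show "hd ps = ps ! 0" "last ps = ps ! (length ps - 1)"
    by (simp_all add: hd_conv_nth last_conv_nth)
qed

lemma nth_inj: "i < length ps \<Longrightarrow> j < length ps \<Longrightarrow> ps ! i = ps ! j \<longleftrightarrow> i = j"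
  using distinct_ps nth_eq_iff_index_eq by blast

lemma nth_not_verts_H: "i < length ps \<Longrightarrow> ps ! i \<notin> verts H"
  using fresh_ps nth_mem by blast

lemma hd_not_verts_H: "hd ps \<notin> verts H" and last_not_verts_H: "last ps \<notin> verts H"
proof -
  have "0 < length ps" "length ps - 1 < length ps" using length_ps by auto
  then show "hd ps \<notin> verts H" "last ps \<notin> verts H"
    unfolding hd_nth last_nth by (simp_all add: nth_not_verts_H)
qed

lemma hd_ne_last: "hd ps \<noteq> last ps"
proof -
  have "0 < length ps" "length ps - 1 < length ps" "0 \<noteq> length ps - 1" using length_ps by linarith+
  then show ?thesis unfolding hd_nth last_nth using nth_inj by blast
qed

lemma adj_extended:
  "adj extended u v \<longleftrightarrow> adj H u v \<or> {u, v} \<in> path_edges ps \<or> (u = hd ps \<and> v \<in> C) \<or>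
     (v = hd ps \<and> u \<in> C) \<or> (u = last ps \<and> v \<in> C') \<or> (v = last ps \<and> u \<in> C')"
  unfolding adj_def edges_extended using mem_star_edges[of u v] by blast

lemma adj_extended_old:
  assumes "x \<in> verts H"
  shows "adj extended x y \<longleftrightarrow> adj H x y \<or> (y = hd ps \<and> x \<in> C) \<or> (y = last ps \<and> x \<in> C')"
proof -
  have "{x, y} \<notin> path_edges ps" using assms fresh_ps doubleton_in_path_edges[of x y ps] by blast
  moreover have "x \<noteq> hd ps" "x \<noteq> last ps" using assms hd_not_verts_H last_not_verts_H by blast+
  ultimately show ?thesis using adj_extended[of x y] by blast
qed

lemma adj_extended_old_old: "u \<in> verts H \<Longrightarrow> v \<in> verts H \<Longrightarrow> adj extended u v \<longleftrightarrow> adj H u v"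
  using adj_extended_old[of u v] hd_not_verts_H last_not_verts_H by blast

lemma adj_extended_path:
  assumes i: "i < length ps"
  shows "adj extended (ps ! i) y \<longleftrightarrow> y \<in> pred_side i \<union> succ_side i"
proof -
  have "\<not> adj H (ps ! i) y" using wf_graph_adjD[OF wf_H, of "ps ! i" y] nth_not_verts_H[OF i] by blast
  moreover have "ps ! i \<notin> C" "ps ! i \<notin> C'" using nth_not_verts_H[OF i] C_verts C'_verts by blast+
  moreover have "ps ! i = hd ps \<longleftrightarrow> i = 0"
  proof -
    have "0 < length ps" using length_ps by linarith
    then show ?thesis unfolding hd_nth using nth_inj[OF i, of 0] by blast
  qed
  moreover have "ps ! i = last ps \<longleftrightarrow> Suc i = length ps"
  proof -
    have "length ps - 1 < length ps" using length_ps by linarith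
    then show ?thesis unfolding last_nth using nth_inj[OF i, of "length ps - 1"] i by linarith
  qed
  ultimately have "adj extended (ps ! i) y \<longleftrightarrow> (0 < i \<and> y = ps ! (i - 1)) \<or>
      (Suc i < length ps \<and> y = ps ! Suc i) \<or> (i = 0 \<and> y \<in> C) \<or> (Suc i = length ps \<and> y \<in> C')"
    unfolding adj_extended[of "ps ! i" y] path_edges_nth_iff[OF distinct_ps i] by blast
  then show ?thesis
    unfolding pred_side_def succ_side_def using i by auto
qed

lemma hd_last_in_set: "hd ps \<in> set ps" "last ps \<in> set ps"
proof -
  have "ps \<noteq> []" using length_ps by auto
  then show "hd ps \<in> set ps" "last ps \<in> set ps" by simp_all
qed

lemma ends_verts_extended: "hd ps \<in> verts extended" "last ps \<in> verts extended"
  using hd_last_in_set by (simp_all add: verts_extended)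

lemma wf_extended: "wf_graph extended"
  unfolding wf_graph_def
proof
  show "finite (verts extended)" using wf_H by (simp add: verts_extended wf_graph_def)
  show "edges extended \<subseteq> {{u, v} |u v. u \<in> verts extended \<and> v \<in> verts extended \<and> u \<noteq> v}"
  proof
    fix e assume "e \<in> edges extended"
    then consider "e \<in> edges H" | "e \<in> path_edges ps"
      | c where "c \<in> C" "e = {hd ps, c}" | c where "c \<in> C'" "e = {last ps, c}"
      unfolding edges_extended by blast
    then obtain u v where "e = {u, v}" "u \<in> verts extended" "v \<in> verts extended" "u \<noteq> v"
    proof cases
      case 1
      then show ?thesis using that wf_H unfolding wf_graph_def verts_extended by blast
    next
      case 2
      then show ?thesis using that path_edges_subset[OF distinct_ps] unfolding verts_extended by blast
    next
      case 3
      then show ?thesis using that C_verts hd_not_verts_H ends_verts_extended(1) unfolding verts_extended by blast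
    next
      case 4
      then show ?thesis using that C'_verts last_not_verts_H ends_verts_extended(2) unfolding verts_extended by blast
    qed
    then show "e \<in> {{u, v} |u v. u \<in> verts extended \<and> v \<in> verts extended \<and> u \<noteq> v}" by blast
  qed
qed

lemma complete_set_extended: "complete_set H S \<Longrightarrow> complete_set extended S"
  by (rule complete_set_mono_graph) (auto simp: verts_extended edges_extended)

lemma complete_extended_hd: "complete_set extended (insert (hd ps) C)"
  by (rule complete_set_insert[OF complete_set_extended[OF cliqueD(1)[OF clique_C]]])
    (use ends_verts_extended in \<open>auto simp: adj_extended\<close>)

lemma complete_extended_last: "complete_set extended (insert (last ps) C')"
  by (rule complete_set_insert[OF complete_set_extended[OF cliqueD(1)[OF clique_C']]])
    (use ends_verts_extended in \<open>auto simp: adj_extended\<close>)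

lemma nbhd_split_extended_attached:
  assumes split: "nbhd_split H x X1 X2" and A: "A \<subseteq> set ps"
    and adj_x: "\<And>y. adj extended x y \<longleftrightarrow> adj H x y \<or> y \<in> A"
    and complete: "complete_set extended (insert x X1 \<union> A)"
    and adj_back: "\<And>a z. a \<in> A \<Longrightarrow> z \<in> verts H \<Longrightarrow> adj extended a z \<Longrightarrow> z \<in> insert x X1"
  shows "nbhd_split extended x (X1 \<union> A) X2"
proof (rule nbhd_splitI)
  note d = nbhd_splitD[OF split]
  have X1_H: "X1 \<subseteq> verts H" and X2_H: "X2 \<subseteq> verts H"
    using complete_setD(1)[OF d(4)] complete_setD(1)[OF d(5)] by blast+
  have x_X2: "x \<notin> X2" using nbhd_split_not_mem[OF wf_H split] by blast
  show "X1 \<union> A \<noteq> {}" "X2 \<noteq> {}" using d(1,2) by auto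
  show "(X1 \<union> A) \<inter> X2 = {}" using d(3) X2_H A fresh_ps by blast
  show "complete_set extended (insert x (X1 \<union> A))" using complete by simp
  show "complete_set extended (insert x X2)" using complete_set_extended[OF d(5)] .
  show "\<not> adj extended y z" if y: "y \<in> X1 \<union> A" and z: "z \<in> X2" for y z
  proof
    assume yz: "adj extended y z"
    show False
    proof (cases "y \<in> A")
      case True
      then have "z \<in> insert x X1" using adj_back[OF True _ yz] X2_H z by blast
      then show False using z d(3) x_X2 by blast
    next
      case False
      then have "y \<in> X1" using y by blast
      then show False using yz adj_extended_old_old[of y z] X1_H X2_H z d(6)[of y z] by blast
    qed
  qed
  show "adj extended x y \<longleftrightarrow> y \<in> X1 \<union> A \<union> X2" for y
    using adj_x[of y] d(7)[of y] by blast
qed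

lemma nbhd_split_extended_attached_clique:
  assumes x: "x \<in> verts H" "x \<in> D" and D: "clique H D" and a: "a \<in> set ps"
    and adj_x: "\<And>y. adj extended x y \<longleftrightarrow> adj H x y \<or> y = a"
    and complete: "complete_set extended (insert a D)"
    and adj_back: "\<And>z. z \<in> verts H \<Longrightarrow> adj extended a z \<Longrightarrow> z \<in> D"
  shows "\<exists>X1 X2. nbhd_split extended x X1 X2"
proof -
  obtain X1 X2 where split: "nbhd_split H x X1 X2"
    using split_H x(1) unfolding nbhd_split_graph_def by blast
  have attach: "nbhd_split extended x (Y1 \<union> {a}) Y2"
    if "nbhd_split H x Y1 Y2" "D = insert x Y1" for Y1 Y2
  proof -
    have "nbhd_split extended x (Y1 \<union> {a}) Y2"
    proof (rule nbhd_split_extended_attached[OF that(1)])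
      show "{a} \<subseteq> set ps" using a by simp
      show "adj extended x y \<longleftrightarrow> adj H x y \<or> y \<in> {a}" for y using adj_x[of y] by simp
      show "complete_set extended (insert x Y1 \<union> {a})" using complete that(2) by (simp add: insert_commute)
      show "z \<in> insert x Y1" if "b \<in> {a}" "z \<in> verts H" "adj extended b z" for b z
        using adj_back[of z] that \<open>D = insert x Y1\<close> by blast
    qed
    then show ?thesis by simp
  qed
  show ?thesis
    using clique_through_nbhd_split[OF split D x(2)] attach[OF split]
      attach[OF nbhd_split_commute[OF split]] by blast
qed

lemma adj_extended_hd_old: "z \<in> verts H \<Longrightarrow> adj extended (hd ps) z \<Longrightarrow> z \<in> C"
  using adj_extended_old[of z "hd ps"] adj_sym[of extended "hd ps" z]
    wf_graph_adjD[OF wf_H, of z "hd ps"] hd_not_verts_H hd_ne_last by blast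

lemma adj_extended_last_old: "z \<in> verts H \<Longrightarrow> adj extended (last ps) z \<Longrightarrow> z \<in> C'"
  using adj_extended_old[of z "last ps"] adj_sym[of extended "last ps" z]
    wf_graph_adjD[OF wf_H, of z "last ps"] last_not_verts_H hd_ne_last[symmetric] by blast

lemma nbhd_split_extended_old:
  assumes x: "x \<in> verts H"
  shows "\<exists>X1 X2. nbhd_split extended x X1 X2"
proof -
  consider "x \<in> C" | "x \<in> C'" | "x \<notin> C" "x \<notin> C'" by blast
  then show ?thesis
  proof cases
    case 1
    then have "adj extended x y \<longleftrightarrow> adj H x y \<or> y = hd ps" for y
      using adj_extended_old[OF x, of y] disjoint by blast
    then show ?thesis
      using nbhd_split_extended_attached_clique[OF x 1 clique_C hd_last_in_set(1) _ complete_extended_hd adj_extended_hd_old] by blast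
  next
    case 2
    then have "adj extended x y \<longleftrightarrow> adj H x y \<or> y = last ps" for y
      using adj_extended_old[OF x, of y] disjoint by blast
    then show ?thesis
      using nbhd_split_extended_attached_clique[OF x 2 clique_C' hd_last_in_set(2) _ complete_extended_last adj_extended_last_old] by blast
  next
    case 3
    obtain X1 X2 where split: "nbhd_split H x X1 X2"
      using split_H x unfolding nbhd_split_graph_def by blast
    have "nbhd_split extended x (X1 \<union> {}) X2"
    proof (rule nbhd_split_extended_attached[OF split])
      show "adj extended x y \<longleftrightarrow> adj H x y \<or> y \<in> {}" for y using adj_extended_old[OF x, of y] 3 by blast
      show "complete_set extended (insert x X1 \<union> {})"
        using complete_set_extended[OF nbhd_splitD(4)[OF split]] by simp
    qed auto
    then show ?thesis by blast
  qed
qed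

lemma complete_set_pred_side:
  assumes i: "i < length ps"
  shows "complete_set extended (insert (ps ! i) (pred_side i))"
proof (cases "i = 0")
  case True
  then show ?thesis using complete_extended_hd hd_nth by (simp add: pred_side_def)
next
  case False
  then have "i - 1 < length ps" "adj extended (ps ! i) (ps ! (i - 1))"
    using i adj_extended_path[OF i] by (auto simp: pred_side_def)
  then show ?thesis
    using complete_set_pair[of "ps ! i" extended "ps ! (i - 1)"] i False
    by (simp add: pred_side_def verts_extended)
qed

lemma complete_set_succ_side:
  assumes i: "i < length ps"
  shows "complete_set extended (insert (ps ! i) (succ_side i))"
proof (cases "Suc i = length ps")
  case True
  then have "ps ! i = last ps" unfolding last_nth by (simp flip: True)
  then show ?thesis using complete_extended_last True by (simp add: succ_side_def)
next
  case False
  then have "Suc i < length ps" "adj extended (ps ! i) (ps ! (Suc i))"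
    using i adj_extended_path[OF i] by (auto simp: succ_side_def)
  then show ?thesis
    using complete_set_pair[of "ps ! i" extended "ps ! (Suc i)"] i False
    by (simp add: succ_side_def verts_extended)
qed

lemma pred_side_succ_side_not_adj:
  assumes i: "i < length ps" and y: "y \<in> pred_side i" and z: "z \<in> succ_side i"
  shows "\<not> adj extended y z"
proof (cases "i = 0")
  case True
  then have y_C: "y \<in> C" and z_1: "z = ps ! 1" and one: "1 < length ps"
    using y z length_ps by (auto simp: pred_side_def succ_side_def split: if_splits)
  have "0 < length ps" using one by linarith
  then have "z \<noteq> hd ps" unfolding hd_nth z_1 using nth_inj[OF one] by simp
  moreover have "z \<notin> verts H" "y \<notin> C'" "y \<in> verts H"
    using nth_not_verts_H[OF one] z_1 y_C disjoint C_verts by auto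
  ultimately show ?thesis using adj_extended_old[of y z] wf_graph_adjD[OF wf_H, of y z] by blast
next
  case False
  then have y_pred: "y = ps ! (i - 1)" and i': "i - 1 < length ps"
    using y i by (auto simp: pred_side_def)
  have "z \<notin> pred_side (i - 1) \<union> succ_side (i - 1)"
    using z False i disjoint nth_inj C_verts C'_verts nth_not_verts_H
    by (auto simp: pred_side_def succ_side_def split: if_splits)
  then show ?thesis using adj_extended_path[OF i'] y_pred by blast
qed

lemma nbhd_split_extended_path:
  assumes i: "i < length ps"
  shows "nbhd_split extended (ps ! i) (pred_side i) (succ_side i)"
proof (rule nbhd_splitI)
  show "pred_side i \<noteq> {}" "succ_side i \<noteq> {}"
    unfolding pred_side_def succ_side_def using C_nonempty C'_nonempty by auto
  show "pred_side i \<inter> succ_side i = {}"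
    unfolding pred_side_def succ_side_def
    using i length_ps disjoint C_verts C'_verts nth_not_verts_H nth_inj by auto
  show "complete_set extended (insert (ps ! i) (pred_side i))" using complete_set_pred_side[OF i] .
  show "complete_set extended (insert (ps ! i) (succ_side i))" using complete_set_succ_side[OF i] .
  show "\<not> adj extended y z" if "y \<in> pred_side i" "z \<in> succ_side i" for y z
    using pred_side_succ_side_not_adj[OF i that] .
  show "adj extended (ps ! i) y \<longleftrightarrow> y \<in> pred_side i \<union> succ_side i" for y
    using adj_extended_path[OF i] .
qed

lemma nbhd_split_graph_extended: "nbhd_split_graph extended"
  unfolding nbhd_split_graph_def
proof (intro conjI ballI)
  show "wf_graph extended" by (rule wf_extended)
  show "verts extended \<noteq> {}" using length_ps by (auto simp: verts_extended)
  fix x assume "x \<in> verts extended"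
  then consider "x \<in> verts H" | i where "i < length ps" "x = ps ! i"
    by (auto simp: verts_extended in_set_conv_nth)
  then show "\<exists>X1 X2. nbhd_split extended x X1 X2"
    by cases (use nbhd_split_extended_old nbhd_split_extended_path in blast)+
qed

end

lemma gate_nbhd_split_graph: "gate G \<Longrightarrow> nbhd_split_graph G"
proof (induction rule: gate.induct)
  case (gate_cycle vs)
  then show ?case by (rule nbhd_split_graph_cycle)
next
  case (gate_ext H C C' ps)
  then interpret gate_extension H C C' ps by unfold_locales
  show ?case using nbhd_split_graph_extended unfolding extended_def .
qed

section \<open>The star as host tree\<close>

definition star_tree :: "nat \<Rightarrow> nat graph" where
  "star_tree k = ({0..k}, {{0, i} | i. i \<in> {1..k}})"

lemma verts_star_tree: "verts (star_tree k) = {0..k}"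
  by (simp add: star_tree_def verts_def)

lemma edges_star_tree: "edges (star_tree k) = {{0, i} | i. i \<in> {1..k}}"
  by (simp add: star_tree_def edges_def)

lemma adj_star_tree: "adj (star_tree k) u v \<longleftrightarrow> (u = 0 \<and> v \<in> {1..k}) \<or> (v = 0 \<and> u \<in> {1..k})"
  unfolding adj_def edges_star_tree by (rule mem_star_edges)

lemma wf_graph_star_tree: "wf_graph (star_tree k)"
  unfolding wf_graph_def verts_star_tree edges_star_tree by force

lemma is_star_star_tree: "k \<ge> 1 \<Longrightarrow> is_star (star_tree k)"
  unfolding is_star_def
proof (intro conjI bexI)
  assume "k \<ge> 1"
  then show "2 \<le> card (verts (star_tree k))" by (simp add: verts_star_tree)
  have "x \<in> {1..k} \<longleftrightarrow> x \<in> {0..k} \<and> x \<noteq> 0" for x :: nat by auto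
  then show "edges (star_tree k) = {{0, x} |x. x \<in> verts (star_tree k) \<and> x \<noteq> 0}"
    unfolding verts_star_tree edges_star_tree by simp
qed (simp_all add: wf_graph_star_tree verts_star_tree)

lemma connected_graph_star_tree: "connected_graph (star_tree k)"
  unfolding connected_graph_def
proof (intro ballI)
  fix u v assume "u \<in> verts (star_tree k)" "v \<in> verts (star_tree k)"
  then have "u = 0 \<or> adj (star_tree k) u 0" "v = 0 \<or> adj (star_tree k) 0 v"
    by (auto simp: adj_star_tree verts_star_tree)
  then have "(adj (star_tree k))\<^sup>*\<^sup>* u 0" "(adj (star_tree k))\<^sup>*\<^sup>* 0 v" by auto
  then show "(adj (star_tree k))\<^sup>*\<^sup>* u v" by simp
qed

text \<open>Every edge of a star contains the centre, so of three consecutive vertices of a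
  closed walk the middle one or both outer ones are the centre.\<close>
lemma not_has_cycle_star_tree: "\<not> has_cycle (star_tree k)"
  unfolding has_cycle_def
proof
  assume "\<exists>cs. distinct cs \<and> 3 \<le> length cs \<and> set cs \<subseteq> verts (star_tree k) \<and>
      (\<forall>i. Suc i < length cs \<longrightarrow> adj (star_tree k) (cs ! i) (cs ! Suc i)) \<and>
      adj (star_tree k) (last cs) (hd cs)"
  then obtain cs where dist: "distinct cs" and len: "3 \<le> length cs"
    and step: "\<And>i. Suc i < length cs \<Longrightarrow> adj (star_tree k) (cs ! i) (cs ! Suc i)"
    and close: "adj (star_tree k) (last cs) (hd cs)" by blast
  have centre: "u = 0 \<or> v = 0" if "adj (star_tree k) u v" for u v
    using that by (auto simp: adj_star_tree)
  have ne: "cs ! i \<noteq> cs ! j" if "i < length cs" "j < length cs" "i \<noteq> j" for i j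
    using dist that nth_eq_iff_index_eq by blast
  have "cs \<noteq> []" using len by auto
  then have hd_last: "hd cs = cs ! 0" "last cs = cs ! (length cs - 1)"
    by (simp_all add: hd_conv_nth last_conv_nth)
  have "cs ! 0 = 0 \<or> cs ! 1 = 0" "cs ! 1 = 0 \<or> cs ! 2 = 0"
    using centre[OF step[of 0]] centre[OF step[of 1]] len by (simp_all add: numeral_2_eq_2)
  moreover have "cs ! 0 \<noteq> cs ! 2" "cs ! 0 \<noteq> cs ! 1" "cs ! (length cs - 1) \<noteq> cs ! 1"
    using ne[of 0 2] ne[of 0 1] ne[of "length cs - 1" 1] len \<open>cs \<noteq> []\<close> by auto
  moreover have "cs ! (length cs - 1) = 0 \<or> cs ! 0 = 0"
    using centre[OF close] hd_last by simp
  ultimately show False by metis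
qed

lemma is_tree_star_tree: "is_tree (star_tree k)"
  unfolding is_tree_def
  using wf_graph_star_tree connected_graph_star_tree not_has_cycle_star_tree
  by (simp add: verts_star_tree)

lemma max_degree_star_tree: "k \<ge> 1 \<Longrightarrow> max_degree (star_tree k) = k"
proof -
  assume k: "k \<ge> 1"
  have "{u. adj (star_tree k) u 0} = {1..k}" by (auto simp: adj_star_tree)
  then have centre: "degree (star_tree k) 0 = k" unfolding degree_def by simp
  have "{u. adj (star_tree k) u i} = {0}" if "i \<in> {1..k}" for i
    using that by (auto simp: adj_star_tree)
  then have leaves: "degree (star_tree k) ` {1..k} = {1}" using k unfolding degree_def by auto
  have "{0..k} = insert 0 {1..k}" by auto
  then have "degree (star_tree k) ` verts (star_tree k) = {k, 1}"
    using centre leaves by (simp add: verts_star_tree)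
  then show ?thesis unfolding max_degree_def using k by (simp add: max_def)
qed

section \<open>The Helly representation\<close>

lemma path_edges_three: "path_edges [a, b, c] = {{a, b}, {b, c}}"
proof -
  have "path_edges [a, b, c] = (\<lambda>i. {[a, b, c] ! i, [a, b, c] ! Suc i}) ` {i. Suc i < 3}"
    unfolding path_edges_def by auto
  moreover have "{i. Suc i < 3} = {0, 1 :: nat}" by auto
  ultimately show ?thesis by simp
qed

lemma finite_cliques: "wf_graph G \<Longrightarrow> finite {C. clique G C}"
  using clique_subset_verts[of G] unfolding wf_graph_def
  by (auto intro: finite_subset[of _ "Pow (verts G)"])

lemma two_le_num_cliques:
  assumes "nbhd_split_graph G"
  shows "num_cliques G \<ge> 2"
proof -
  have wf: "wf_graph G" using assms unfolding nbhd_split_graph_def by simp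
  obtain x X1 X2 where split: "nbhd_split G x X1 X2"
    using assms unfolding nbhd_split_graph_def by blast
  have "{insert x X1, insert x X2} \<subseteq> {C. clique G C}"
    using cliques_through_nbhd_split(1)[OF wf split] by blast
  then have "card {insert x X1, insert x X2} \<le> num_cliques G"
    unfolding num_cliques_def using card_mono[OF finite_cliques[OF wf]] by blast
  then show ?thesis using cliques_through_nbhd_split(2)[OF wf split] by simp
qed

text \<open>On the star with centre 0, the leaf Suc (f C) stands for the clique C, and the path
  of a vertex joins the leaves of its two cliques.\<close>
locale clique_star_rep =
  fixes G :: "'a graph" and X1 X2 :: "'a \<Rightarrow> 'a set" and f :: "'a set \<Rightarrow> nat"
  assumes wf: "wf_graph G"
    and split: "\<And>x. x \<in> verts G \<Longrightarrow> nbhd_split G x (X1 x) (X2 x)"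
    and f_inj: "inj_on f {C. clique G C}"
    and f_range: "\<And>C. clique G C \<Longrightarrow> f C < num_cliques G"
begin

definition clique_edge :: "'a set \<Rightarrow> nat set" where
  "clique_edge C = {0, Suc (f C)}"

definition rep_path :: "'a \<Rightarrow> nat list" where
  "rep_path x = [Suc (f (insert x (X1 x))), 0, Suc (f (insert x (X2 x)))]"

lemma path_edges_rep_path:
  assumes "x \<in> verts G"
  shows "path_edges (rep_path x) = clique_edge ` {C. clique G C \<and> x \<in> C}"
  unfolding rep_path_def path_edges_three cliques_through_nbhd_split(1)[OF wf split[OF assms]]
  by (simp add: clique_edge_def insert_commute)

lemma clique_edge_inj: "clique G C \<Longrightarrow> clique G D \<Longrightarrow> clique_edge C = clique_edge D \<Longrightarrow> C = D"
  using f_inj unfolding clique_edge_def inj_on_def by (auto simp: doubleton_eq_iff)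

lemma rep_paths_intersect_iff:
  assumes "v \<in> verts G" "w \<in> verts G"
  shows "path_edges (rep_path v) \<inter> path_edges (rep_path w) \<noteq> {} \<longleftrightarrow>
    (\<exists>C. clique G C \<and> v \<in> C \<and> w \<in> C)"
  unfolding path_edges_rep_path[OF assms(1)] path_edges_rep_path[OF assms(2)]
  using clique_edge_inj by blast

lemma is_subpath_rep_path:
  assumes x: "x \<in> verts G"
  shows "is_subpath (star_tree (num_cliques G)) (rep_path x)"
proof -
  have cliques: "clique G (insert x (X1 x))" "clique G (insert x (X2 x))"
    using cliques_through_nbhd_split(1)[OF wf split[OF x]] by blast+
  have "f (insert x (X1 x)) \<noteq> f (insert x (X2 x))"
    using cliques_through_nbhd_split(2)[OF wf split[OF x]] f_inj cliques unfolding inj_on_def by blast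
  then have "distinct (rep_path x)" by (simp add: rep_path_def)
  moreover have leaves: "Suc (f (insert x (X1 x))) \<in> {1..num_cliques G}"
    "Suc (f (insert x (X2 x))) \<in> {1..num_cliques G}"
    using f_range[OF cliques(1)] f_range[OF cliques(2)] by auto
  moreover have "adj (star_tree (num_cliques G)) (rep_path x ! i) (rep_path x ! Suc i)"
    if "Suc i < length (rep_path x)" for i
  proof -
    have "i = 0 \<or> i = 1" using that by (auto simp: rep_path_def)
    then show ?thesis using leaves by (auto simp: rep_path_def adj_star_tree)
  qed
  ultimately show ?thesis
    unfolding is_subpath_def by (auto simp: rep_path_def verts_star_tree)
qed

lemma ept_rep_star_tree: "ept_rep G (star_tree (num_cliques G)) rep_path"
  unfolding ept_rep_def
  using is_tree_star_tree is_subpath_rep_path adj_iff_common_clique[OF split] rep_paths_intersect_iff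
  by blast

lemma helly_ept_rep_star_tree: "helly_ept_rep G (star_tree (num_cliques G)) rep_path"
  unfolding helly_ept_rep_def
proof (intro conjI allI impI ept_rep_star_tree)
  fix S assume S: "S \<subseteq> verts G \<and> S \<noteq> {} \<and>
    (\<forall>v\<in>S. \<forall>w\<in>S. path_edges (rep_path v) \<inter> path_edges (rep_path w) \<noteq> {})"
  then obtain v where v: "v \<in> S" by blast
  have "\<exists>C. clique G C \<and> u \<in> C \<and> w \<in> C" if "u \<in> S" "w \<in> S" for u w
    using S that rep_paths_intersect_iff[of u w] by blast
  then obtain C where C: "clique G C" "S \<subseteq> C"
    using pairwise_common_clique_imp_clique[OF split v] S v by blast
  then have "clique_edge C \<in> path_edges (rep_path w)" if "w \<in> S" for w
    using that S path_edges_rep_path[of w] by blast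
  then show "(\<Inter>v\<in>S. path_edges (rep_path v)) \<noteq> {}" by blast
qed

end

theorem lemma4:
  fixes G :: "'a graph" and k :: nat
  assumes "gate G" and "num_cliques G = k"
  shows "helly_h22 k G \<and> (\<exists>(T::nat graph) P. is_star T \<and> helly_h22_rep k G T P)"
proof -
  have G: "nbhd_split_graph G" using gate_nbhd_split_graph[OF assms(1)] .
  then have wf: "wf_graph G" unfolding nbhd_split_graph_def by simp
  obtain X1 X2 where split: "\<And>x. x \<in> verts G \<Longrightarrow> nbhd_split G x (X1 x) (X2 x)"
    using G unfolding nbhd_split_graph_def by metis
  obtain f where f: "bij_betw f {C. clique G C} {0..<num_cliques G}"
    using ex_bij_betw_finite_nat[OF finite_cliques[OF wf]] unfolding num_cliques_def by blast
  interpret clique_star_rep G X1 X2 f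
    using wf split f unfolding bij_betw_def by unfold_locales auto
  have "k \<ge> 1" using two_le_num_cliques[OF G] assms(2) by simp
  then have "is_star (star_tree k)" "helly_h22_rep k G (star_tree k) rep_path"
    using is_star_star_tree helly_ept_rep_star_tree max_degree_star_tree assms(2)
    unfolding helly_h22_rep_def by blast+
  then show ?thesis unfolding helly_h22_def by blast
qed

end
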